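(* Let $c:\mathcal H\times\mathcal K\to[0,1]$ be any classifier, let $m,n$ be positive integers and let $\delta\in(0,1]$. If $S$ is a random sample drawn by the two-stage sampling scheme described in the context (with $m$ raters and $n$ examples per rater), then with probability at least $1-\delta$, $$\bigl|L_{\mathcal D}(c)-L_S(c)\bigr|\;\le\;\frac{1}{3m}\left[g+\sqrt{g^2+18\,g\,m\left(\frac1n\,\mathbb E[\mathbb V(\ell_c\mid H)]+\mathbb V(\mathbb E[\ell_c\mid H])\right)}\right],\qquad g:=\ln(2/\delta).$$
   Context: Setting. $\mathcal H$ is a set of users, $\mathcal X$ a set of contexts, $\mathcal Y$ a set of responses, $\mathcal K:=\mathcal X\times\mathcal Y\times\mathcal Y$, and $\mathcal Z:=\{0,1\}$. $\mathcal D$ is a probability distribution on $\mathcal H\times\mathcal K\times\mathcal Z$; $\mathcal D_{\mathcal H}$ denotes its marginal on $\mathcal H$ and $\mathcal D^h$ the conditional distribution of $(K,Z)$ given $H=h$. A classifier is a (measurable) map $c:\mathcal H\times\mathcal K\to[0,1]$. A loss is a map $\ell:[0,1]\times\mathcal Z\to[0,1]$ (values assumed to lie in $[0,1]$). Sampling scheme: $h_1,\dots,h_m$ are drawn i.i.d. from $\mathcal D_{\mathcal H}$; conditionally on $h_i$, pairs $(k_{ij},z_{ij})$, $j=1,\dots,n$, are drawn i.i.d. from $\mathcal D^{h_i}$, independently across $i$; $S=\{(h_i,k_{ij},z_{ij})\}_{i\le m,j\le n}$. Losses: $L_{\mathcal D}(c):=\mathbb E_{(H,K,Z)\sim\mathcal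 D}[\ell(c(H,K),Z)]$ and $L_S(c):=\frac1{mn}\sum_{i=1}^m\sum_{j=1}^n\ell(c(h_i,k_{ij}),z_{ij})$. Write $\ell_c:=\ell(c(H,K),Z)$ with $(H,K,Z)\sim\mathcal D$; $\mathbb E[\mathbb V(\ell_c\mid H)]$ is the expected conditional variance of $\ell_c$ given $H$, and $\mathbb V(\mathbb E[\ell_c\mid H])$ is the variance of the conditional mean of $\ell_c$ given $H$. *)

theory Defs
  imports "HOL-Probability.Probability"
begin

text \<open>The distribution D on H x K x Z is given by its marginal MH on users
  together with a (measurable) regular conditional distribution Dc h = D^h on K x Z,
  where Z = {0,1} is modelled by bool with the discrete sigma-algebra.\<close>

definition KZ :: "'k measure \<Rightarrow> ('k \<times> bool) measure" where
  "KZ MK = MK \<Otimes>\<^sub>M count_space UNIV"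

definition jointD :: "'h measure \<Rightarrow> 'k measure \<Rightarrow> ('h \<Rightarrow> ('k \<times> bool) measure)
    \<Rightarrow> ('h \<times> 'k \<times> bool) measure" where
  "jointD MH MK Dc = MH \<bind> (\<lambda>h. distr (Dc h) (MH \<Otimes>\<^sub>M KZ MK) (\<lambda>kz. (h, kz)))"

definition L_D :: "'h measure \<Rightarrow> 'k measure \<Rightarrow> ('h \<Rightarrow> ('k \<times> bool) measure)
    \<Rightarrow> (real \<Rightarrow> bool \<Rightarrow> real) \<Rightarrow> ('h \<Rightarrow> 'k \<Rightarrow> real) \<Rightarrow> real" where
  "L_D MH MK Dc loss c = (\<integral>(h,k,z). loss (c h k) z \<partial>jointD MH MK Dc)"

definition cond_mean :: "('h \<Rightarrow> ('k \<times> bool) measure) \<Rightarrow> (real \<Rightarrow> bool \<Rightarrow> real)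
    \<Rightarrow> ('h \<Rightarrow> 'k \<Rightarrow> real) \<Rightarrow> 'h \<Rightarrow> real" where
  "cond_mean Dc loss c h = (\<integral>(k,z). loss (c h k) z \<partial>Dc h)"

definition cond_var :: "('h \<Rightarrow> ('k \<times> bool) measure) \<Rightarrow> (real \<Rightarrow> bool \<Rightarrow> real)
    \<Rightarrow> ('h \<Rightarrow> 'k \<Rightarrow> real) \<Rightarrow> 'h \<Rightarrow> real" where
  "cond_var Dc loss c h = (\<integral>(k,z). (loss (c h k) z - cond_mean Dc loss c h)\<^sup>2 \<partial>Dc h)"

definition exp_cond_var :: "'h measure \<Rightarrow> ('h \<Rightarrow> ('k \<times> bool) measure) \<Rightarrow> (real \<Rightarrow> bool \<Rightarrow> real)
    \<Rightarrow> ('h \<Rightarrow> 'k \<Rightarrow> real) \<Rightarrow> real" where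
  "exp_cond_var MH Dc loss c = (\<integral>h. cond_var Dc loss c h \<partial>MH)"

definition var_cond_mean :: "'h measure \<Rightarrow> ('h \<Rightarrow> ('k \<times> bool) measure) \<Rightarrow> (real \<Rightarrow> bool \<Rightarrow> real)
    \<Rightarrow> ('h \<Rightarrow> 'k \<Rightarrow> real) \<Rightarrow> real" where
  "var_cond_mean MH Dc loss c =
     (\<integral>h. (cond_mean Dc loss c h - (\<integral>h'. cond_mean Dc loss c h' \<partial>MH))\<^sup>2 \<partial>MH)"

text \<open>Two-stage sampling: a sample is a map i < m \<mapsto> (h_i, (j < n \<mapsto> (k_ij, z_ij))).
  Each block: h ~ MH, then n i.i.d. draws from Dc h; blocks independent.\<close>
definition rater_block :: "'h measure \<Rightarrow> 'k measure \<Rightarrow> ('h \<Rightarrow> ('k \<times> bool) measure) \<Rightarrow> nat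
    \<Rightarrow> ('h \<times> (nat \<Rightarrow> 'k \<times> bool)) measure" where
  "rater_block MH MK Dc n =
     MH \<bind> (\<lambda>h. distr (PiM {..<n} (\<lambda>j. Dc h))
                        (MH \<Otimes>\<^sub>M PiM {..<n} (\<lambda>j. KZ MK)) (\<lambda>ks. (h, ks)))"

definition sample_measure :: "'h measure \<Rightarrow> 'k measure \<Rightarrow> ('h \<Rightarrow> ('k \<times> bool) measure)
    \<Rightarrow> nat \<Rightarrow> nat \<Rightarrow> (nat \<Rightarrow> 'h \<times> (nat \<Rightarrow> 'k \<times> bool)) measure" where
  "sample_measure MH MK Dc m n = PiM {..<m} (\<lambda>i. rater_block MH MK Dc n)"

definition L_S :: "nat \<Rightarrow> nat \<Rightarrow> (real \<Rightarrow> bool \<Rightarrow> real) \<Rightarrow> ('h \<Rightarrow> 'k \<Rightarrow> real)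
    \<Rightarrow> (nat \<Rightarrow> 'h \<times> (nat \<Rightarrow> 'k \<times> bool)) \<Rightarrow> real" where
  "L_S m n loss c S = (1 / (real m * real n)) *
     (\<Sum>i<m. \<Sum>j<n. loss (c (fst (S i)) (fst (snd (S i) j))) (snd (snd (S i) j)))"

end

theory Submission
  imports Defs
begin

text \<open>The rater means \<open>Y\<^sub>i = (1/n) \<Sum>\<^sub>j \<ell>(c(h\<^sub>i, k\<^sub>i\<^sub>j), z\<^sub>i\<^sub>j)\<close> are i.i.d., take values in
  \<open>[0,1]\<close>, have mean \<open>L\<^sub>D(c)\<close> and, by the law of total variance, variance
  \<open>V = E[V(\<ell>\<^sub>c|H)]/n + V(E[\<ell>\<^sub>c|H])\<close>. As \<open>L\<^sub>S(c)\<close> is their average, Bernstein's inequality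
  bounds each tail of \<open>L\<^sub>D(c) - L\<^sub>S(c)\<close> at level \<open>t\<close> by \<open>exp(-m t\<^sup>2 / (2V + 2t/3))\<close>, and the
  threshold of the theorem is the positive root of \<open>m t\<^sup>2 / (2V + 2t/3) = ln(2/\<delta>)\<close>.\<close>
lemma two_mult_three_pow_le_fact: "2 * 3 ^ k \<le> (fact (k + 2) :: real)"
proof (induction k)
  case 0
  then show ?case by simp
next
  case (Suc k)
  have "fact (Suc k + 2) = real (k + 3) * (fact (k + 2) :: real)"
    by (simp add: fact_Suc algebra_simps)
  also have "\<dots> \<ge> 3 * (2 * 3 ^ k)"
    using Suc by (intro mult_mono) auto
  finally show ?case by simp
qed

text \<open>The tail of the exponential series is dominated by a geometric series of ratio
  \<open>\<bar>u\<bar>/3\<close>.\<close>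
lemma exp_le_bernstein_quadratic:
  fixes u a :: real
  assumes "\<bar>u\<bar> \<le> a" "a < 3"
  shows "exp u \<le> 1 + u + u\<^sup>2 / (2 * (1 - a / 3))"
proof -
  have tail: "(\<lambda>k. u ^ (k + 2) / fact (k + 2)) sums (exp u - (1 + u))"
    using sums_split_initial_segment[OF exp_converges[of u], of 2]
    by (simp add: divide_inverse mult.commute numeral_2_eq_2)
  have "\<bar>u\<bar> / 3 < 1" using assms by simp
  then have geom: "(\<lambda>k. u\<^sup>2 / 2 * (\<bar>u\<bar> / 3) ^ k) sums (u\<^sup>2 / 2 * (1 / (1 - \<bar>u\<bar> / 3)))"
    using geometric_sums[of "\<bar>u\<bar>/3"] by (intro sums_mult) auto
  have term_le: "u ^ (k + 2) / fact (k + 2) \<le> u\<^sup>2 / 2 * (\<bar>u\<bar> / 3) ^ k" for k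
  proof -
    have "u ^ (k + 2) \<le> \<bar>u\<bar> ^ (k + 2)" by (metis abs_ge_self power_abs)
    also have "\<dots> = u\<^sup>2 * \<bar>u\<bar> ^ k" by (simp add: power_add power2_eq_square mult.commute)
    finally have "u ^ (k + 2) / fact (k + 2) \<le> u\<^sup>2 * \<bar>u\<bar> ^ k / fact (k + 2)"
      by (intro divide_right_mono) auto
    also have "\<dots> \<le> u\<^sup>2 * \<bar>u\<bar> ^ k / (2 * 3 ^ k)"
      by (intro divide_left_mono two_mult_three_pow_le_fact) auto
    also have "\<dots> = u\<^sup>2 / 2 * (\<bar>u\<bar> / 3) ^ k" by (simp add: power_divide)
    finally show ?thesis .
  qed
  have "exp u - (1 + u) \<le> u\<^sup>2 / 2 * (1 / (1 - \<bar>u\<bar> / 3))"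
    using sums_le[OF term_le tail geom] .
  also have "\<dots> \<le> u\<^sup>2 / 2 * (1 / (1 - a / 3))"
    using assms by (intro mult_left_mono divide_left_mono mult_pos_pos) auto
  finally show ?thesis by simp
qed

text \<open>The optimal Chernoff parameter \<open>\<lambda> = 3t / (3V + t)\<close>.\<close>
lemma bernstein_exponent_choice:
  fixes t V :: real
  assumes "t > 0" "V \<ge> 0"
  shows "\<exists>l>0. l < 3 \<and> - l * t + l\<^sup>2 * V / (2 * (1 - l / 3)) \<le> - (t\<^sup>2 / (2 * V + 2 * t / 3))"
proof (cases "V = 0")
  case True
  show ?thesis
    by (rule exI[of _ 2]) (use assms True in \<open>auto simp: field_simps power2_eq_square\<close>)
next
  case False
  with assms have V: "V > 0" by simp
  define D where "D = 3 * V + t"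
  have D: "D > 0" using assms V by (simp add: D_def)
  define l where "l = 3 * t / D"
  have l: "l > 0" "l < 3" using assms V D by (simp_all add: l_def D_def field_simps)
  have "1 - l / 3 = 3 * V / D" using D by (simp add: l_def D_def field_simps)
  then have "l\<^sup>2 * V / (2 * (1 - l / 3)) = 3 * t\<^sup>2 / (2 * D)"
    using D V unfolding \<open>1 - l / 3 = 3 * V / D\<close> by (simp add: l_def field_simps power2_eq_square)
  moreover have "t\<^sup>2 / (2 * V + 2 * t / 3) = 3 * t\<^sup>2 / (2 * D)"
    using D by (simp add: D_def field_simps)
  moreover have "- l * t + 3 * t\<^sup>2 / (2 * D) = - (3 * t\<^sup>2 / (2 * D))"
    using D by (simp add: l_def field_simps power2_eq_square)
  ultimately show ?thesis using l by auto
qed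

lemma bernstein_upper_tail_iid:
  fixes R :: "'a measure" and Z :: "'a \<Rightarrow> real"
  assumes R: "prob_space R" and Zm[measurable]: "Z \<in> borel_measurable R"
    and Zb: "\<And>x. x \<in> space R \<Longrightarrow> \<bar>Z x\<bar> \<le> 1"
    and EZ: "(\<integral>x. Z x \<partial>R) = 0" and VZ: "(\<integral>x. (Z x)\<^sup>2 \<partial>R) \<le> V"
    and t: "t > 0" and V: "V \<ge> 0"
  shows "measure (PiM {..<m} (\<lambda>_. R))
           {S \<in> space (PiM {..<m} (\<lambda>_. R)). real m * t \<le> (\<Sum>i<m. Z (S i))}
         \<le> exp (- (real m * (t\<^sup>2 / (2 * V + 2 * t / 3))))"
proof -
  interpret R: prob_space R by (rule R)
  interpret P: product_prob_space "\<lambda>_. R" "{..<m}" by unfold_locales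
  define P where "P = PiM {..<m} (\<lambda>_. R)"
  interpret PP: prob_space P unfolding P_def by (rule P.P.prob_space_axioms)
  obtain l where l: "l > 0" "l < 3"
    and lb: "- l * t + l\<^sup>2 * V / (2 * (1 - l / 3)) \<le> - (t\<^sup>2 / (2 * V + 2 * t / 3))"
    using bernstein_exponent_choice[OF t V] by blast
  define q where "q = l\<^sup>2 / (2 * (1 - l / 3))"
  have q: "q \<ge> 0" using l by (simp add: q_def)
  have intZ: "integrable R Z"
    by (rule R.integrable_const_bound[where B=1]) (use Zb in auto)
  have intZ2: "integrable R (\<lambda>x. (Z x)\<^sup>2)"
    by (rule R.integrable_const_bound[where B=1]) (use Zb in \<open>auto simp: abs_square_le_1\<close>)
  have pointwise: "exp (l * Z x) \<le> 1 + l * Z x + q * (Z x)\<^sup>2" if "x \<in> space R" for x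
  proof -
    have "\<bar>l * Z x\<bar> \<le> l" using Zb[OF that] l by (simp add: abs_mult mult_left_le)
    from exp_le_bernstein_quadratic[OF this l(2)] show ?thesis
      by (simp add: q_def power_mult_distrib)
  qed
  have mgf: "(\<integral>\<^sup>+x. ennreal (exp (l * Z x)) \<partial>R) \<le> ennreal (exp (q * V))"
  proof -
    have "(\<integral>\<^sup>+x. ennreal (exp (l * Z x)) \<partial>R) \<le> (\<integral>\<^sup>+x. ennreal (1 + l * Z x + q * (Z x)\<^sup>2) \<partial>R)"
      by (intro nn_integral_mono ennreal_leI pointwise)
    also have "\<dots> = ennreal (\<integral>x. 1 + l * Z x + q * (Z x)\<^sup>2 \<partial>R)"
      using intZ intZ2 pointwise
      by (intro nn_integral_eq_integral AE_I2) (auto intro: order_trans[OF less_imp_le[OF exp_gt_zero]])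
    also have "(\<integral>x. 1 + l * Z x + q * (Z x)\<^sup>2 \<partial>R) = 1 + l * (\<integral>x. Z x \<partial>R) + q * (\<integral>x. (Z x)\<^sup>2 \<partial>R)"
      using intZ intZ2 by (simp add: R.prob_space)
    also have "\<dots> \<le> 1 + q * V" using EZ VZ q by (simp add: mult_left_mono)
    also have "\<dots> \<le> exp (q * V)" by (rule exp_ge_add_one_self)
    finally show ?thesis by (simp add: ennreal_leI)
  qed
  have "emeasure P {S \<in> space P. real m * t \<le> (\<Sum>i<m. Z (S i))} \<le>
        ennreal (exp (- l * (real m * t))) *
          (\<integral>\<^sup>+S. ennreal (exp (l * (\<Sum>i<m. Z (S i)))) * indicator (space P) S \<partial>P)"
    by (rule Chernoff_ineq_nn_integral_ge) (use l in \<open>auto simp: P_def\<close>)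
  also have "(\<integral>\<^sup>+S. ennreal (exp (l * (\<Sum>i<m. Z (S i)))) * indicator (space P) S \<partial>P)
      = (\<integral>\<^sup>+S. (\<Prod>i\<in>{..<m}. ennreal (exp (l * Z (S i)))) \<partial>P)"
    by (intro nn_integral_cong) (simp add: sum_distrib_left exp_sum prod_ennreal)
  also have "\<dots> = (\<Prod>i\<in>{..<m}. (\<integral>\<^sup>+x. ennreal (exp (l * Z x)) \<partial>R))"
    unfolding P_def by (rule P.product_nn_integral_prod) auto
  also have "ennreal (exp (- l * (real m * t))) * \<dots>
      \<le> ennreal (exp (- l * (real m * t))) * (\<Prod>i\<in>{..<m}. ennreal (exp (q * V)))"
    by (intro mult_left_mono prod_mono_ennreal mgf) auto
  also have "(\<Prod>i\<in>{..<m}. ennreal (exp (q * V))) = ennreal (exp (q * V) ^ m)"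
    by (simp add: ennreal_power)
  also have "ennreal (exp (- l * (real m * t))) * ennreal (exp (q * V) ^ m)
      = ennreal (exp (real m * (- l * t + q * V)))"
    by (simp add: ennreal_mult[symmetric] exp_of_nat_mult[symmetric] exp_add[symmetric] algebra_simps)
  also have "\<dots> \<le> ennreal (exp (- (real m * (t\<^sup>2 / (2 * V + 2 * t / 3)))))"
  proof -
    have "- l * t + q * V \<le> - (t\<^sup>2 / (2 * V + 2 * t / 3))" using lb by (simp add: q_def)
    then have "real m * (- l * t + q * V) \<le> real m * (- (t\<^sup>2 / (2 * V + 2 * t / 3)))"
      by (rule mult_left_mono) simp
    then show ?thesis by (intro ennreal_leI) simp
  qed
  finally show ?thesis
    unfolding P_def[symmetric] by (simp add: PP.emeasure_eq_measure ennreal_le_iff)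
qed

lemma bernstein_iid:
  fixes R :: "'a measure" and Z :: "'a \<Rightarrow> real"
  assumes R: "prob_space R" and Zm[measurable]: "Z \<in> borel_measurable R"
    and Zb: "\<And>x. x \<in> space R \<Longrightarrow> \<bar>Z x\<bar> \<le> 1"
    and EZ: "(\<integral>x. Z x \<partial>R) = 0" and VZ: "(\<integral>x. (Z x)\<^sup>2 \<partial>R) \<le> V"
    and t: "t > 0" and V: "V \<ge> 0"
  shows "measure (PiM {..<m} (\<lambda>_. R))
           {S \<in> space (PiM {..<m} (\<lambda>_. R)). \<bar>\<Sum>i<m. Z (S i)\<bar> \<le> real m * t}
         \<ge> 1 - 2 * exp (- (real m * (t\<^sup>2 / (2 * V + 2 * t / 3))))"
proof -
  define P where "P = PiM {..<m} (\<lambda>_. R)"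
  interpret P: prob_space P
    unfolding P_def by (intro prob_space_PiM R)
  define tail where "tail Y = {S \<in> space P. real m * t \<le> (\<Sum>i<m. Y (S i))}" for Y :: "'a \<Rightarrow> real"
  have [measurable]: "tail Z \<in> sets P" "tail (\<lambda>x. - Z x) \<in> sets P"
    unfolding tail_def P_def by measurable
  have [measurable]: "{S \<in> space P. \<bar>\<Sum>i<m. Z (S i)\<bar> \<le> real m * t} \<in> sets P"
    unfolding P_def by measurable
  have "space P - {S \<in> space P. \<bar>\<Sum>i<m. Z (S i)\<bar> \<le> real m * t} \<subseteq> tail Z \<union> tail (\<lambda>x. - Z x)"
    by (auto simp: tail_def sum_negf)
  then have "1 - measure P {S \<in> space P. \<bar>\<Sum>i<m. Z (S i)\<bar> \<le> real m * t}
      \<le> measure P (tail Z) + measure P (tail (\<lambda>x. - Z x))"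
    by (subst P.prob_compl[symmetric]) (auto intro!: order_trans[OF P.finite_measure_mono measure_Un_le])
  also have "\<dots> \<le> 2 * exp (- (real m * (t\<^sup>2 / (2 * V + 2 * t / 3))))"
    using bernstein_upper_tail_iid[OF R Zm Zb EZ VZ t V, of m]
      bernstein_upper_tail_iid[OF R _ _ _ _ t V, of "\<lambda>x. - Z x" m] Zb EZ VZ
    by (simp add: tail_def P_def)
  finally show ?thesis by (simp add: P_def)
qed

lemma bernstein_rate_at_threshold:
  fixes g V :: real and m :: nat
  assumes g: "g > 0" and V: "V \<ge> 0" and m: "m > 0"
  defines "t \<equiv> 1 / (3 * real m) * (g + sqrt (g\<^sup>2 + 18 * g * real m * V))"
  shows "t > 0" and "real m * (t\<^sup>2 / (2 * V + 2 * t / 3)) = g"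
proof -
  define s where "s = sqrt (g\<^sup>2 + 18 * g * real m * V)"
  have radicand: "0 \<le> g\<^sup>2 + 18 * g * real m * V" using g V by simp
  have s0: "s \<ge> 0" and s2: "s\<^sup>2 = g\<^sup>2 + 18 * g * real m * V"
    unfolding s_def using radicand by simp_all
  have t_eq: "t = (g + s) / (3 * real m)" by (simp add: t_def s_def)
  show t: "t > 0" using g s0 m by (simp add: t_eq)
  have "real m * t\<^sup>2 = (g + s)\<^sup>2 / (9 * real m)"
    using m by (simp add: t_eq power2_eq_square field_simps)
  also have "\<dots> = g * (2 * V + 2 * t / 3)"
    using s2 m by (simp add: t_eq power2_eq_square field_simps)
  finally show "real m * (t\<^sup>2 / (2 * V + 2 * t / 3)) = g"
    using t V by (simp add: field_simps)
qed

lemma integral_PiM_component: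
  fixes g :: "'a \<Rightarrow> real"
  assumes "prob_space M" "j \<in> I" and [measurable]: "g \<in> borel_measurable M"
  shows "(\<integral>x. g (x j) \<partial>PiM I (\<lambda>_. M)) = (\<integral>x. g x \<partial>M)"
proof -
  have "(\<integral>x. g (x j) \<partial>PiM I (\<lambda>_. M)) = (\<integral>x. g x \<partial>distr (PiM I (\<lambda>_. M)) M (\<lambda>x. x j))"
    using assms(2) by (intro integral_distr[symmetric]) auto
  also have "distr (PiM I (\<lambda>_. M)) M (\<lambda>x. x j) = M"
    using assms(1,2) by (rule distr_PiM_component)
  finally show ?thesis .
qed

lemma integral_PiM_mult_components:
  fixes g h :: "'a \<Rightarrow> real"
  assumes "prob_space M" "finite I" "j \<in> I" "k \<in> I" "j \<noteq> k"
    and "integrable M g" "integrable M h"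
  shows "(\<integral>x. g (x j) * h (x k) \<partial>PiM I (\<lambda>_. M)) = (\<integral>x. g x \<partial>M) * (\<integral>x. h x \<partial>M)"
proof -
  interpret M: prob_space M by (rule assms(1))
  interpret P: product_prob_space "\<lambda>_. M" I by unfold_locales
  define F where "F = (\<lambda>i. if i = j then g else if i = k then h else (\<lambda>_. 1::real))"
  have split_off: "(\<Prod>i\<in>I. u i) = u j * u k" if "\<And>i. i \<in> I - {j, k} \<Longrightarrow> u i = 1"
    for u :: "'b \<Rightarrow> real"
  proof -
    have "(\<Prod>i\<in>I. u i) = u j * (u k * (\<Prod>i\<in>I - {j} - {k}. u i))"
      using assms by (simp add: prod.remove[of I j] prod.remove[of "I - {j}" k])
    also have "(\<Prod>i\<in>I - {j} - {k}. u i) = 1"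
      using that by (intro prod.neutral) auto
    finally show ?thesis by simp
  qed
  have "(\<integral>x. g (x j) * h (x k) \<partial>PiM I (\<lambda>_. M)) = (\<integral>x. (\<Prod>i\<in>I. F i (x i)) \<partial>PiM I (\<lambda>_. M))"
    using assms(5) by (subst split_off) (auto simp: F_def)
  also have "\<dots> = (\<Prod>i\<in>I. (\<integral>x. F i x \<partial>M))"
    using assms by (intro P.product_integral_prod) (auto simp: F_def)
  also have "\<dots> = (\<integral>x. g x \<partial>M) * (\<integral>x. h x \<partial>M)"
    using assms(5) by (subst split_off) (auto simp: F_def M.prob_space)
  finally show ?thesis .
qed

text \<open>The cross terms vanish by independence.\<close>
lemma integral_PiM_sum_components_sq:
  fixes g :: "'a \<Rightarrow> real"
  assumes M: "prob_space M" and I: "finite I" and g[measurable]: "g \<in> borel_measurable M"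
    and gB: "\<And>x. x \<in> space M \<Longrightarrow> \<bar>g x\<bar> \<le> B" and g0: "(\<integral>x. g x \<partial>M) = 0"
  shows "(\<integral>x. (\<Sum>j\<in>I. g (x j))\<^sup>2 \<partial>PiM I (\<lambda>_. M)) = card I * (\<integral>x. (g x)\<^sup>2 \<partial>M)"
proof -
  interpret M: prob_space M by (rule M)
  define P where "P = PiM I (\<lambda>_. M)"
  interpret P: prob_space P unfolding P_def by (intro prob_space_PiM M)
  have comp_space: "x j \<in> space M" if "x \<in> space P" "j \<in> I" for x j
    using that by (auto simp: P_def space_PiM PiE_iff)
  have int_g: "integrable M g"
    by (rule M.integrable_const_bound[where B=B]) (use gB in auto)
  have int_prod: "integrable P (\<lambda>x. g (x j) * g (x k))" if "j \<in> I" "k \<in> I" for j k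
  proof (rule P.integrable_const_bound[where B="B * B"])
    show "AE x in P. norm (g (x j) * g (x k)) \<le> B * B"
      using that comp_space gB
      by (intro AE_I2) (auto simp: abs_mult intro!: mult_mono order_trans[OF abs_ge_zero gB])
  qed (use that in \<open>simp add: P_def\<close>)
  have cov: "(\<integral>x. g (x j) * g (x k) \<partial>P) = (if j = k then (\<integral>x. (g x)\<^sup>2 \<partial>M) else 0)"
    if "j \<in> I" "k \<in> I" for j k
  proof (cases "j = k")
    case True
    then show ?thesis
      using integral_PiM_component[OF M \<open>j \<in> I\<close>, of "\<lambda>x. (g x)\<^sup>2"]
      by (simp add: P_def power2_eq_square)
  next
    case False
    then show ?thesis
      using integral_PiM_mult_components[OF M I that False int_g int_g] g0 by (simp add: P_def)
  qed
  have "(\<integral>x. (\<Sum>j\<in>I. g (x j))\<^sup>2 \<partial>P) = (\<integral>x. (\<Sum>j\<in>I. \<Sum>k\<in>I. g (x j) * g (x k)) \<partial>P)"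
    by (simp add: power2_eq_square sum_product)
  also have "\<dots> = (\<Sum>j\<in>I. \<Sum>k\<in>I. (\<integral>x. g (x j) * g (x k) \<partial>P))"
    using int_prod by (simp add: Bochner_Integration.integral_sum Bochner_Integration.integrable_sum)
  also have "\<dots> = card I * (\<integral>x. (g x)\<^sup>2 \<partial>M)"
    using I by (simp add: cov)
  finally show ?thesis by (simp add: P_def)
qed

lemma integral_PiM_sample_mean:
  fixes f :: "'a \<Rightarrow> real"
  assumes M: "prob_space M" and I: "finite I" "I \<noteq> {}" and f[measurable]: "f \<in> borel_measurable M"
    and fB: "\<And>x. x \<in> space M \<Longrightarrow> \<bar>f x\<bar> \<le> B"
  shows "(\<integral>x. (\<Sum>j\<in>I. f (x j)) / card I \<partial>PiM I (\<lambda>_. M)) = (\<integral>x. f x \<partial>M)"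
proof -
  interpret P: prob_space "PiM I (\<lambda>_. M)" by (intro prob_space_PiM M)
  have "integrable (PiM I (\<lambda>_. M)) (\<lambda>x. f (x j))" if "j \<in> I" for j
    by (rule P.integrable_const_bound[where B=B]) (use that fB in \<open>auto simp: space_PiM PiE_iff\<close>)
  then show ?thesis
    using integral_PiM_component[OF M _ f, of _ I] I
    by (simp add: Bochner_Integration.integral_sum)
qed

lemma integral_PiM_sample_mean_sq_dev:
  fixes f :: "'a \<Rightarrow> real"
  assumes M: "prob_space M" and I: "finite I" "I \<noteq> {}" and f[measurable]: "f \<in> borel_measurable M"
    and fB: "\<And>x. x \<in> space M \<Longrightarrow> \<bar>f x\<bar> \<le> B"
  shows "(\<integral>x. ((\<Sum>j\<in>I. f (x j)) / card I - a)\<^sup>2 \<partial>PiM I (\<lambda>_. M))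
           = (\<integral>x. (f x - (\<integral>x. f x \<partial>M))\<^sup>2 \<partial>M) / card I + ((\<integral>x. f x \<partial>M) - a)\<^sup>2"
proof -
  interpret M: prob_space M by (rule M)
  define P where "P = PiM I (\<lambda>_. M)"
  interpret P: prob_space P unfolding P_def by (intro prob_space_PiM M)
  define \<mu> where "\<mu> = (\<integral>x. f x \<partial>M)"
  define d where "d x = f x - \<mu>" for x
  have d_meas[measurable]: "d \<in> borel_measurable M" unfolding d_def by measurable
  define S where "S x = (\<Sum>j\<in>I. d (x j))" for x
  have int_f: "integrable M f"
    by (rule M.integrable_const_bound[where B=B]) (use fB in auto)
  have "\<bar>\<mu>\<bar> \<le> B"
  proof -
    have "\<bar>\<mu>\<bar> \<le> (\<integral>x. \<bar>f x\<bar> \<partial>M)" unfolding \<mu>_def by (rule integral_abs_bound)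
    also have "\<dots> \<le> (\<integral>x. B \<partial>M)" using fB int_f by (intro integral_mono) auto
    finally show ?thesis by (simp add: M.prob_space)
  qed
  then have dB: "\<bar>d x\<bar> \<le> 2 * B" if "x \<in> space M" for x
    using fB[OF that] by (simp add: d_def)
  have d0: "(\<integral>x. d x \<partial>M) = 0"
    using int_f by (simp add: d_def \<mu>_def M.prob_space)
  have comp_space: "x j \<in> space M" if "x \<in> space P" "j \<in> I" for x j
    using that by (auto simp: P_def space_PiM PiE_iff)
  have int_d: "integrable P (\<lambda>x. d (x j))" if "j \<in> I" for j
    by (rule P.integrable_const_bound[where B="2 * B"])
       (use that comp_space dB in \<open>auto simp: P_def d_def\<close>)
  have SB: "\<bar>S x\<bar> \<le> card I * (2 * B)" if "x \<in> space P" for x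
    unfolding S_def using that comp_space dB
    by (intro order_trans[OF sum_abs] sum_bounded_above) auto
  have ES: "(\<integral>x. S x \<partial>P) = 0"
    using int_d integral_PiM_component[OF M _ d_meas, of _ I] d0
    by (simp add: S_def P_def Bochner_Integration.integral_sum)
  have ES2: "(\<integral>x. (S x)\<^sup>2 \<partial>P) = card I * (\<integral>x. (d x)\<^sup>2 \<partial>M)"
    unfolding S_def P_def by (rule integral_PiM_sum_components_sq[OF M I(1) d_meas dB d0])
  have int_S: "integrable P S"
    unfolding S_def[abs_def] using int_d by auto
  have int_S2: "integrable P (\<lambda>x. (S x)\<^sup>2)"
  proof (rule P.integrable_const_bound[where B="(card I * (2 * B))\<^sup>2"])
    show "AE x in P. norm ((S x)\<^sup>2) \<le> (card I * (2 * B))\<^sup>2"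
      using SB by (intro AE_I2) (auto simp flip: abs_le_square_iff intro: order_trans[OF _ abs_ge_self])
  qed (simp add: S_def d_def P_def)
  have dev: "(\<Sum>j\<in>I. f (x j)) / card I - a = S x / card I + (\<mu> - a)" for x
    using I by (simp add: S_def d_def sum_subtractf field_simps)
  have "(\<integral>x. ((\<Sum>j\<in>I. f (x j)) / card I - a)\<^sup>2 \<partial>P)
      = (\<integral>x. (S x)\<^sup>2 / (card I)\<^sup>2 + (2 * (\<mu> - a) / card I * S x + (\<mu> - a)\<^sup>2) \<partial>P)"
    unfolding dev using I by (intro Bochner_Integration.integral_cong refl) (simp add: power2_eq_square field_simps)
  also have "\<dots> = (\<integral>x. (S x)\<^sup>2 \<partial>P) / (card I)\<^sup>2 + (2 * (\<mu> - a) / card I * (\<integral>x. S x \<partial>P) + (\<mu> - a)\<^sup>2)"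
    using int_S int_S2 by (simp add: P.prob_space)
  also have "\<dots> = (\<integral>x. (d x)\<^sup>2 \<partial>M) / card I + (\<mu> - a)\<^sup>2"
    using I by (simp add: ES ES2) (simp add: power2_eq_square)
  finally show ?thesis by (simp add: P_def d_def \<mu>_def)
qed

lemma prob_algebra_kernelD:
  assumes "K \<in> MH \<rightarrow>\<^sub>M prob_algebra N" "h \<in> space MH"
  shows "sets (K h) = sets N" "prob_space (K h)"
  using measurable_space[OF assms] by (auto simp: space_prob_algebra)

lemma measurable_PiM_kernel:
  assumes Dc: "Dc \<in> MH \<rightarrow>\<^sub>M prob_algebra N" and fin: "finite I"
  shows "(\<lambda>h. PiM I (\<lambda>j. Dc h)) \<in> MH \<rightarrow>\<^sub>M prob_algebra (PiM I (\<lambda>_. N))"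
proof (rule measurable_prob_algebra_generated[where \<Omega>="\<Pi>\<^sub>E j\<in>I. space N" and G="prod_algebra I (\<lambda>_. N)"])
  show "sets (PiM I (\<lambda>_. N)) = sigma_sets (\<Pi>\<^sub>E j\<in>I. space N) (prod_algebra I (\<lambda>_. N))"
    by (rule sets_PiM)
  show "Int_stable (prod_algebra I (\<lambda>_. N))" by (rule Int_stable_prod_algebra)
  show "prod_algebra I (\<lambda>_. N) \<subseteq> Pow (\<Pi>\<^sub>E j\<in>I. space N)" by (rule prod_algebra_sets_into_space)
next
  fix h assume h: "h \<in> space MH"
  note Dh = prob_algebra_kernelD[OF Dc h]
  show "prob_space (PiM I (\<lambda>j. Dc h))" by (intro prob_space_PiM Dh)
  show "sets (PiM I (\<lambda>j. Dc h)) = sets (PiM I (\<lambda>_. N))" by (intro sets_PiM_cong) (auto simp: Dh)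
next
  fix A assume "A \<in> prod_algebra I (\<lambda>_. N)"
  then obtain X where A: "A = Pi\<^sub>E I X" "X \<in> (\<Pi> j\<in>I. sets N)"
    unfolding prod_algebra_eq_finite[OF fin] by auto
  have "(\<lambda>h. \<Prod>j\<in>I. emeasure (Dc h) (X j)) \<in> borel_measurable MH"
    using A by (intro borel_measurable_prod_ennreal
        measurable_compose[OF measurable_prob_algebraD[OF Dc] measurable_emeasure_subprob_algebra]) auto
  moreover have "emeasure (PiM I (\<lambda>j. Dc h)) A = (\<Prod>j\<in>I. emeasure (Dc h) (X j))"
    if h: "h \<in> space MH" for h
  proof -
    note Dh = prob_algebra_kernelD[OF Dc h]
    interpret Dh: prob_space "Dc h" by (rule Dh(2))
    interpret P: product_prob_space "\<lambda>j. Dc h" I by unfold_locales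
    show ?thesis using A Dh(1) fin by (simp add: P.emeasure_PiM Pi_iff)
  qed
  ultimately show "(\<lambda>h. emeasure (PiM I (\<lambda>j. Dc h)) A) \<in> borel_measurable MH"
    by (subst measurable_cong) auto
qed

lemma integral_bind_kernel:
  fixes f :: "'a \<times> 'b \<Rightarrow> real"
  assumes K: "K \<in> MH \<rightarrow>\<^sub>M prob_algebra N" and MH: "prob_space MH"
    and f[measurable]: "f \<in> borel_measurable (MH \<Otimes>\<^sub>M N)"
    and fB: "\<And>x. x \<in> space (MH \<Otimes>\<^sub>M N) \<Longrightarrow> \<bar>f x\<bar> \<le> B"
  shows "(\<integral>x. f x \<partial>(MH \<bind> (\<lambda>h. distr (K h) (MH \<Otimes>\<^sub>M N) (\<lambda>y. (h, y)))))
           = (\<integral>h. (\<integral>y. f (h, y) \<partial>K h) \<partial>MH)"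
    and "(\<lambda>h. \<integral>y. f (h, y) \<partial>K h) \<in> borel_measurable MH"
proof -
  define Kd where "Kd = (\<lambda>h. distr (K h) (MH \<Otimes>\<^sub>M N) (\<lambda>y. (h, y)))"
  have Kd: "Kd \<in> MH \<rightarrow>\<^sub>M prob_algebra (MH \<Otimes>\<^sub>M N)"
    unfolding Kd_def by (rule measurable_distr_prob_space2[OF K]) measurable
  have section_eq: "(\<integral>x. f x \<partial>Kd h) = (\<integral>y. f (h, y) \<partial>K h)" if h: "h \<in> space MH" for h
  proof -
    have "(\<lambda>y. (h, y)) \<in> K h \<rightarrow>\<^sub>M MH \<Otimes>\<^sub>M N"
      using measurable_Pair1'[OF h, of N] prob_algebra_kernelD(1)[OF K h]
      by (simp cong: measurable_cong_sets)
    then show ?thesis unfolding Kd_def by (intro integral_distr) auto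
  qed
  have "(\<integral>x. f x \<partial>(MH \<bind> Kd)) = (\<integral>h. (\<integral>x. f x \<partial>Kd h) \<partial>MH)"
  proof (rule integral_bind[OF f fB measurable_prob_algebraD[OF Kd]])
    show "finite_measure MH" using MH by (rule prob_space.finite_measure)
    show "AE x in MH. emeasure (Kd x) (space (Kd x)) \<le> ennreal 1"
      using prob_space.emeasure_space_1[OF prob_algebra_kernelD(2)[OF Kd]] by (intro AE_I2) simp
  qed
  also have "\<dots> = (\<integral>h. (\<integral>y. f (h, y) \<partial>K h) \<partial>MH)"
    by (rule Bochner_Integration.integral_cong[OF refl section_eq])
  finally show "(\<integral>x. f x \<partial>(MH \<bind> (\<lambda>h. distr (K h) (MH \<Otimes>\<^sub>M N) (\<lambda>y. (h, y)))))
      = (\<integral>h. (\<integral>y. f (h, y) \<partial>K h) \<partial>MH)"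
    by (simp add: Kd_def)
  have "(\<lambda>h. \<integral>x. f x \<partial>Kd h) \<in> borel_measurable MH"
    by (rule measurable_compose[OF measurable_prob_algebraD[OF Kd] integral_measurable_subprob_algebra[OF f]])
  then show "(\<lambda>h. \<integral>y. f (h, y) \<partial>K h) \<in> borel_measurable MH"
    by (subst measurable_cong[OF section_eq[symmetric]]) auto
qed

lemma integral_in_unit_interval:
  fixes f :: "'a \<Rightarrow> real"
  assumes "prob_space M" "f \<in> borel_measurable M" "\<And>x. x \<in> space M \<Longrightarrow> f x \<in> {0..1}"
  shows "(\<integral>x. f x \<partial>M) \<in> {0..1}"
proof -
  interpret prob_space M by fact
  have "integrable M f"
    by (rule integrable_const_bound[where B=1]) (use assms in auto)
  then have "(\<integral>x. f x \<partial>M) \<le> (\<integral>x. 1 \<partial>M)"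
    using assms by (intro integral_mono) auto
  moreover have "0 \<le> (\<integral>x. f x \<partial>M)" using assms by (intro Bochner_Integration.integral_nonneg) auto
  ultimately show ?thesis by (simp add: prob_space)
qed

lemma integral_kernel_section_in_unit_interval:
  fixes f :: "'a \<times> 'b \<Rightarrow> real"
  assumes K: "K \<in> MH \<rightarrow>\<^sub>M prob_algebra N" and f[measurable]: "f \<in> borel_measurable (MH \<Otimes>\<^sub>M N)"
    and f01: "\<And>x. x \<in> space (MH \<Otimes>\<^sub>M N) \<Longrightarrow> f x \<in> {0..1}" and h: "h \<in> space MH"
  shows "(\<integral>y. f (h, y) \<partial>K h) \<in> {0..1}"
proof (rule integral_in_unit_interval[OF prob_algebra_kernelD(2)[OF K h]])
  show "(\<lambda>y. f (h, y)) \<in> borel_measurable (K h)"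
    using measurable_compose[OF measurable_Pair1'[OF h] f] prob_algebra_kernelD(1)[OF K h]
    by (simp cong: measurable_cong_sets)
  show "f (h, y) \<in> {0..1}" if "y \<in> space (K h)" for y
    using that h sets_eq_imp_space_eq[OF prob_algebra_kernelD(1)[OF K h]]
    by (intro f01) (auto simp: space_pair_measure)
qed

locale two_stage_sampling =
  fixes MH :: "'h measure" and MK :: "'k measure" and Dc :: "'h \<Rightarrow> ('k \<times> bool) measure"
    and loss :: "real \<Rightarrow> bool \<Rightarrow> real" and c :: "'h \<Rightarrow> 'k \<Rightarrow> real" and n :: nat
  assumes prob_space_MH: "prob_space MH"
    and Dc_kernel: "Dc \<in> MH \<rightarrow>\<^sub>M prob_algebra (KZ MK)"
    and loss_measurable: "(\<lambda>(h, k, z). loss (c h k) z) \<in> borel_measurable (MH \<Otimes>\<^sub>M KZ MK)"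
    and loss_unit: "\<And>h k z. loss (c h k) z \<in> {0..1}"
    and n_pos: "n > 0"
begin

sublocale MH: prob_space MH by (rule prob_space_MH)

definition loss_at :: "'h \<times> 'k \<times> bool \<Rightarrow> real" where
  "loss_at = (\<lambda>(h, k, z). loss (c h k) z)"

definition rater_mean :: "'h \<times> (nat \<Rightarrow> 'k \<times> bool) \<Rightarrow> real" where
  "rater_mean x = (\<Sum>j<n. loss_at (fst x, snd x j)) / n"

lemma loss_at_measurable[measurable]: "loss_at \<in> borel_measurable (MH \<Otimes>\<^sub>M KZ MK)"
  unfolding loss_at_def by (rule loss_measurable)

lemma loss_at_unit: "loss_at x \<in> {0..1}"
  using loss_unit by (auto simp: loss_at_def split: prod.splits)

lemma abs_loss_at_le: "\<bar>loss_at x\<bar> \<le> 1"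
  using loss_at_unit[of x] by auto

lemma cond_mean_eq: "cond_mean Dc loss c h = (\<integral>y. loss_at (h, y) \<partial>Dc h)"
  by (simp add: cond_mean_def loss_at_def)

lemma cond_mean_measurable[measurable]: "cond_mean Dc loss c \<in> borel_measurable MH"
  unfolding cond_mean_eq[abs_def]
  by (rule integral_bind_kernel(2)[OF Dc_kernel prob_space_MH loss_at_measurable abs_loss_at_le])

lemma cond_mean_unit: "h \<in> space MH \<Longrightarrow> cond_mean Dc loss c h \<in> {0..1}"
  unfolding cond_mean_eq
  by (rule integral_kernel_section_in_unit_interval[OF Dc_kernel loss_at_measurable loss_at_unit])

lemma cond_var_eq:
  "cond_var Dc loss c h = (\<integral>y. (loss_at (h, y) - cond_mean Dc loss c h)\<^sup>2 \<partial>Dc h)"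
  unfolding cond_var_def
  by (rule Bochner_Integration.integral_cong) (auto simp: loss_at_def split: prod.splits)

lemma sq_dev_cond_mean_measurable[measurable]:
  "(\<lambda>x. (loss_at x - cond_mean Dc loss c (fst x))\<^sup>2) \<in> borel_measurable (MH \<Otimes>\<^sub>M KZ MK)"
  by measurable

lemma sq_dev_cond_mean_unit:
  "x \<in> space (MH \<Otimes>\<^sub>M KZ MK) \<Longrightarrow> (loss_at x - cond_mean Dc loss c (fst x))\<^sup>2 \<in> {0..1}"
  using loss_at_unit[of x] cond_mean_unit[of "fst x"]
  by (auto simp: space_pair_measure abs_square_le_1 intro!: abs_square_le_1[THEN iffD2])

lemma cond_var_measurable[measurable]: "cond_var Dc loss c \<in> borel_measurable MH"
  using integral_bind_kernel(2)[OF Dc_kernel prob_space_MH sq_dev_cond_mean_measurable]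
    sq_dev_cond_mean_unit
  by (force simp: cond_var_eq[abs_def])

lemma cond_var_unit: "h \<in> space MH \<Longrightarrow> cond_var Dc loss c h \<in> {0..1}"
  using integral_kernel_section_in_unit_interval[OF Dc_kernel sq_dev_cond_mean_measurable
      sq_dev_cond_mean_unit]
  by (simp add: cond_var_eq)

lemma L_D_eq_integral_cond_mean: "L_D MH MK Dc loss c = (\<integral>h. cond_mean Dc loss c h \<partial>MH)"
  using integral_bind_kernel(1)[OF Dc_kernel prob_space_MH loss_at_measurable] loss_at_unit
  by (force simp: L_D_def jointD_def cond_mean_eq loss_at_def[symmetric])

lemma L_D_unit: "L_D MH MK Dc loss c \<in> {0..1}"
  unfolding L_D_eq_integral_cond_mean
  by (rule integral_in_unit_interval[OF prob_space_MH cond_mean_measurable cond_mean_unit])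

lemma rater_kernel:
  "(\<lambda>h. PiM {..<n} (\<lambda>j. Dc h)) \<in> MH \<rightarrow>\<^sub>M prob_algebra (PiM {..<n} (\<lambda>_. KZ MK))"
  by (rule measurable_PiM_kernel[OF Dc_kernel]) simp

lemma rater_block_kernel:
  "(\<lambda>h. distr (PiM {..<n} (\<lambda>j. Dc h)) (MH \<Otimes>\<^sub>M PiM {..<n} (\<lambda>_. KZ MK)) (\<lambda>ks. (h, ks)))
     \<in> MH \<rightarrow>\<^sub>M prob_algebra (MH \<Otimes>\<^sub>M PiM {..<n} (\<lambda>_. KZ MK))"
  by (rule measurable_distr_prob_space2[OF rater_kernel]) measurable

lemma prob_space_rater_block: "prob_space (rater_block MH MK Dc n)"
  unfolding rater_block_def
  using prob_space_MH by (intro prob_space_bind'[OF _ rater_block_kernel]) (simp add: space_prob_algebra)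

lemma sets_rater_block: "sets (rater_block MH MK Dc n) = sets (MH \<Otimes>\<^sub>M PiM {..<n} (\<lambda>_. KZ MK))"
  unfolding rater_block_def
  using prob_space_MH by (intro sets_bind'[OF _ rater_block_kernel]) (simp add: space_prob_algebra)

lemma rater_mean_measurable[measurable]:
  "rater_mean \<in> borel_measurable (MH \<Otimes>\<^sub>M PiM {..<n} (\<lambda>_. KZ MK))"
  unfolding rater_mean_def[abs_def] by measurable

lemma rater_mean_measurable_rater_block[measurable]:
  "rater_mean \<in> borel_measurable (rater_block MH MK Dc n)"
  using rater_mean_measurable by (simp add: sets_rater_block cong: measurable_cong_sets)

lemma rater_mean_unit: "rater_mean x \<in> {0..1}"
proof -
  have "0 \<le> loss_at y" "loss_at y \<le> 1" for y
    using loss_at_unit[of y] by auto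
  then have "0 \<le> (\<Sum>j<n. loss_at (fst x, snd x j))" "(\<Sum>j<n. loss_at (fst x, snd x j)) \<le> n"
    using sum_bounded_above[of "{..<n}" "\<lambda>j. loss_at (fst x, snd x j)" 1] by (simp_all add: sum_nonneg)
  then show ?thesis using n_pos by (simp add: rater_mean_def)
qed

lemma rater_mean_section_moments:
  assumes h: "h \<in> space MH"
  shows "(\<integral>y. rater_mean (h, y) \<partial>PiM {..<n} (\<lambda>j. Dc h)) = cond_mean Dc loss c h"
    and "(\<integral>y. (rater_mean (h, y) - a)\<^sup>2 \<partial>PiM {..<n} (\<lambda>j. Dc h))
           = cond_var Dc loss c h / n + (cond_mean Dc loss c h - a)\<^sup>2"
proof -
  note Dh = prob_algebra_kernelD[OF Dc_kernel h]
  have [measurable]: "(\<lambda>y. loss_at (h, y)) \<in> borel_measurable (Dc h)"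
    using measurable_compose[OF measurable_Pair1'[OF h] loss_at_measurable] Dh(1)
    by (simp cong: measurable_cong_sets)
  have bound: "\<bar>loss_at (h, y)\<bar> \<le> 1" for y by (rule abs_loss_at_le)
  have nonempty: "{..<n} \<noteq> {}" using n_pos by auto
  show "(\<integral>y. rater_mean (h, y) \<partial>PiM {..<n} (\<lambda>j. Dc h)) = cond_mean Dc loss c h"
    using integral_PiM_sample_mean[OF Dh(2), of "{..<n}" "\<lambda>y. loss_at (h, y)" 1] bound nonempty
    by (simp add: rater_mean_def cond_mean_eq)
  show "(\<integral>y. (rater_mean (h, y) - a)\<^sup>2 \<partial>PiM {..<n} (\<lambda>j. Dc h))
      = cond_var Dc loss c h / n + (cond_mean Dc loss c h - a)\<^sup>2"
    using integral_PiM_sample_mean_sq_dev[OF Dh(2), of "{..<n}" "\<lambda>y. loss_at (h, y)" 1 a] bound nonempty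
    by (simp add: rater_mean_def cond_mean_eq[symmetric] cond_var_eq)
qed

lemma integral_rater_block:
  fixes f :: "'h \<times> (nat \<Rightarrow> 'k \<times> bool) \<Rightarrow> real"
  assumes [measurable]: "f \<in> borel_measurable (MH \<Otimes>\<^sub>M PiM {..<n} (\<lambda>_. KZ MK))"
    and "\<And>x. \<bar>f x\<bar> \<le> B"
  shows "(\<integral>x. f x \<partial>rater_block MH MK Dc n) = (\<integral>h. (\<integral>y. f (h, y) \<partial>PiM {..<n} (\<lambda>j. Dc h)) \<partial>MH)"
  unfolding rater_block_def using assms
  by (intro integral_bind_kernel(1)[OF rater_kernel prob_space_MH]) auto

lemma integral_rater_mean: "(\<integral>x. rater_mean x \<partial>rater_block MH MK Dc n) = L_D MH MK Dc loss c"
proof -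
  have "(\<integral>x. rater_mean x \<partial>rater_block MH MK Dc n)
      = (\<integral>h. (\<integral>y. rater_mean (h, y) \<partial>PiM {..<n} (\<lambda>j. Dc h)) \<partial>MH)"
    using rater_mean_unit by (intro integral_rater_block[where B=1]) auto
  also have "\<dots> = (\<integral>h. cond_mean Dc loss c h \<partial>MH)"
    by (intro Bochner_Integration.integral_cong refl rater_mean_section_moments)
  finally show ?thesis by (simp add: L_D_eq_integral_cond_mean)
qed

lemma integral_rater_mean_centered:
  "(\<integral>x. rater_mean x - L_D MH MK Dc loss c \<partial>rater_block MH MK Dc n) = 0"
proof -
  interpret R: prob_space "rater_block MH MK Dc n" by (rule prob_space_rater_block)
  have "integrable (rater_block MH MK Dc n) rater_mean"
    using rater_mean_unit by (intro R.integrable_const_bound[where B=1]) auto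
  then show ?thesis by (simp add: integral_rater_mean R.prob_space)
qed

lemma integral_rater_mean_sq_dev:
  "(\<integral>x. (rater_mean x - L_D MH MK Dc loss c)\<^sup>2 \<partial>rater_block MH MK Dc n)
     = exp_cond_var MH Dc loss c / n + var_cond_mean MH Dc loss c"
proof -
  define \<mu> where "\<mu> = L_D MH MK Dc loss c"
  have dev_bound: "\<bar>u - \<mu>\<bar> \<le> 1" if "u \<in> {0..1}" for u
    using that L_D_unit by (auto simp: \<mu>_def)
  have "(\<integral>x. (rater_mean x - \<mu>)\<^sup>2 \<partial>rater_block MH MK Dc n)
      = (\<integral>h. (\<integral>y. (rater_mean (h, y) - \<mu>)\<^sup>2 \<partial>PiM {..<n} (\<lambda>j. Dc h)) \<partial>MH)"
    using dev_bound[OF rater_mean_unit]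
    by (intro integral_rater_block[where B=1]) (auto simp: abs_square_le_1)
  also have "\<dots> = (\<integral>h. cond_var Dc loss c h / n + (cond_mean Dc loss c h - \<mu>)\<^sup>2 \<partial>MH)"
    by (intro Bochner_Integration.integral_cong refl rater_mean_section_moments)
  also have "\<dots> = (\<integral>h. cond_var Dc loss c h \<partial>MH) / n + (\<integral>h. (cond_mean Dc loss c h - \<mu>)\<^sup>2 \<partial>MH)"
  proof -
    have "integrable MH (cond_var Dc loss c)"
      using cond_var_unit by (intro MH.integrable_const_bound[where B=1]) auto
    moreover have "integrable MH (\<lambda>h. (cond_mean Dc loss c h - \<mu>)\<^sup>2)"
      using dev_bound[OF cond_mean_unit]
      by (intro MH.integrable_const_bound[where B=1]) (auto simp: abs_square_le_1)
    ultimately show ?thesis by simp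
  qed
  finally show ?thesis
    by (simp add: \<mu>_def exp_cond_var_def var_cond_mean_def L_D_eq_integral_cond_mean)
qed

lemma L_S_eq_average_rater_mean: "L_S m n loss c S = (\<Sum>i<m. rater_mean (S i)) / m"
  by (simp add: L_S_def rater_mean_def loss_at_def sum_divide_distrib[symmetric] split_beta)

end

theorem proposition1:
  fixes MH :: "'h measure" and MK :: "'k measure"
    and Dc :: "'h \<Rightarrow> ('k \<times> bool) measure"
    and loss :: "real \<Rightarrow> bool \<Rightarrow> real" and c :: "'h \<Rightarrow> 'k \<Rightarrow> real"
    and m n :: nat and \<delta> :: real
  assumes "prob_space MH"
    and "Dc \<in> MH \<rightarrow>\<^sub>M prob_algebra (KZ MK)"
    and "(\<lambda>(h,k). c h k) \<in> borel_measurable (MH \<Otimes>\<^sub>M MK)"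
    and "\<And>h k. c h k \<in> {0..1}"
    and "\<And>x z. x \<in> {0..1} \<Longrightarrow> loss x z \<in> {0..1}"
    and "(\<lambda>(h,k,z). loss (c h k) z) \<in> borel_measurable (MH \<Otimes>\<^sub>M KZ MK)"
    and "m > 0" and "n > 0" and "0 < \<delta>" and "\<delta> \<le> 1"
  shows "measure (sample_measure MH MK Dc m n)
           {S \<in> space (sample_measure MH MK Dc m n).
              \<bar>L_D MH MK Dc loss c - L_S m n loss c S\<bar> \<le>
                (let g = ln (2 / \<delta>) in
                 1 / (3 * real m) * (g + sqrt (g\<^sup>2 + 18 * g * real m *
                   (exp_cond_var MH Dc loss c / real n + var_cond_mean MH Dc loss c))))}
         \<ge> 1 - \<delta>"
proof -
  interpret two_stage_sampling MH MK Dc loss c n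
    by (rule two_stage_sampling.intro[OF assms(1,2,6) _ assms(8)]) (rule assms(5)[OF assms(4)])
  define R where "R = rater_block MH MK Dc n"
  define \<mu> where "\<mu> = L_D MH MK Dc loss c"
  define V where "V = exp_cond_var MH Dc loss c / n + var_cond_mean MH Dc loss c"
  define g where "g = ln (2 / \<delta>)"
  define t where "t = 1 / (3 * real m) * (g + sqrt (g\<^sup>2 + 18 * g * real m * V))"
  have EZ: "(\<integral>x. rater_mean x - \<mu> \<partial>R) = 0" and VZ: "(\<integral>x. (rater_mean x - \<mu>)\<^sup>2 \<partial>R) = V"
    using integral_rater_mean_centered integral_rater_mean_sq_dev by (simp_all add: R_def \<mu>_def V_def)
  have "V \<ge> 0" unfolding VZ[symmetric] by simp
  moreover have "g > 0" using assms(9,10) by (simp add: g_def)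
  ultimately have "t > 0" and rate: "real m * (t\<^sup>2 / (2 * V + 2 * t / 3)) = g"
    using bernstein_rate_at_threshold[OF _ _ assms(7)] by (simp_all add: t_def)
  have dev_le_1: "\<bar>rater_mean x - \<mu>\<bar> \<le> 1" for x
    using rater_mean_unit[of x] L_D_unit by (auto simp: \<mu>_def)
  have "1 - 2 * exp (- g) \<le> measure (PiM {..<m} (\<lambda>_. R))
      {S \<in> space (PiM {..<m} (\<lambda>_. R)). \<bar>\<Sum>i<m. rater_mean (S i) - \<mu>\<bar> \<le> real m * t}"
    unfolding rate[symmetric] R_def
    by (rule bernstein_iid[OF prob_space_rater_block _ dev_le_1 EZ[unfolded R_def]
          VZ[unfolded R_def, THEN eq_refl] \<open>t > 0\<close> \<open>V \<ge> 0\<close>]) measurable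
  also have "\<dots> = measure (sample_measure MH MK Dc m n)
      {S \<in> space (sample_measure MH MK Dc m n). \<bar>\<mu> - L_S m n loss c S\<bar> \<le> t}"
    using assms(7)
    by (simp add: R_def sample_measure_def L_S_eq_average_rater_mean sum_subtractf abs_minus_commute
        field_simps)
  finally show ?thesis
    using assms(9) by (simp add: Let_def exp_minus g_def t_def V_def \<mu>_def)
qed

end
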